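(* Let $\mathcal{Y}=\{1,\dots,m\}$ be a finite set of classes and $\Delta(\mathcal{Y})$ the set of probability vectors on $\mathcal{Y}$. Let $u:\mathcal{Y}\times\mathcal{Y}\to\mathbb{R}_+$ be nonnegative and nondegenerate (for every $y$ there is $a$ with $u(a,y)>0$), and define $p^u:\Delta(\mathcal{Y})\to\Delta(\mathcal{Y})$ by $p^u_y(q)=\bar u(y,q)/\sum_{y'\in\mathcal{Y}}\bar u(y',q)$, where $\bar u(y,q)=\sum_{y'}u(y,y')q_{y'}$. Then the level sets of $p^u$ are convex: for any $q,q'\in\Delta(\mathcal{Y})$ and $\alpha\in[0,1]$, if $p^u(q)=p^u(q')=p$ then $p^u(\alpha q+(1-\alpha)q')=p$. *)

theory Defs
  imports Complex_Main
begin

definition prob_simplex :: "('y::finite \<Rightarrow> real) set" where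
  "prob_simplex = {q. (\<forall>y. 0 \<le> q y) \<and> (\<Sum>y\<in>UNIV. q y) = 1}"

definition ubar :: "('y::finite \<Rightarrow> 'y \<Rightarrow> real) \<Rightarrow> 'y \<Rightarrow> ('y \<Rightarrow> real) \<Rightarrow> real" where
  "ubar u y q = (\<Sum>y'\<in>UNIV. u y y' * q y')"

definition pu :: "('y::finite \<Rightarrow> 'y \<Rightarrow> real) \<Rightarrow> ('y \<Rightarrow> real) \<Rightarrow> ('y \<Rightarrow> real)" where
  "pu u q = (\<lambda>y. ubar u y q / (\<Sum>y'\<in>UNIV. ubar u y' q))"

end

theory Submission
  imports Defs
begin

text \<open>The map \<open>pu u\<close> only sees the direction of the vector \<open>\<lambda>y. ubar u y q\<close>, which depends
  linearly on \<open>q\<close>. Nondegeneracy makes that vector nonzero on the simplex, so if \<open>q\<close> and \<open>q'\<close>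
  have the same image, their vectors are positive multiples of each other, and then so is the
  vector of any convex combination.\<close>

lemma prob_simplex_ex_pos:
  assumes "q \<in> prob_simplex"
  shows "\<exists>y. 0 < q y"
proof (rule ccontr)
  assume "\<nexists>y. 0 < q y"
  with assms have "q = (\<lambda>_. 0)"
    unfolding prob_simplex_def fun_eq_iff by (simp add: order.antisym not_less)
  with assms show False
    by (simp add: prob_simplex_def)
qed

lemma sum_ubar_pos:
  fixes u :: "'y::finite \<Rightarrow> 'y \<Rightarrow> real"
  assumes nonneg: "\<And>a y. 0 \<le> u a y"
    and nondeg: "\<And>y. \<exists>a. 0 < u a y"
    and q: "q \<in> prob_simplex"
  shows "0 < (\<Sum>y\<in>UNIV. ubar u y q)"
proof -
  obtain y' where "0 < q y'"
    using prob_simplex_ex_pos[OF q] by blast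
  moreover obtain a where "0 < u a y'"
    using nondeg by blast
  ultimately have "0 < u a y' * q y'"
    by simp
  have terms_nonneg: "0 \<le> u y z * q z" for y z
    using nonneg q by (simp add: prob_simplex_def)
  have "u a y' * q y' \<le> ubar u a q"
    unfolding ubar_def by (rule member_le_sum) (simp_all add: terms_nonneg)
  also have "\<dots> \<le> (\<Sum>y\<in>UNIV. ubar u y q)"
    by (rule member_le_sum) (simp_all add: ubar_def terms_nonneg sum_nonneg)
  finally show ?thesis
    using \<open>0 < u a y' * q y'\<close> by linarith
qed

lemma ubar_linear_combination:
  "ubar u y (\<lambda>z. a * q z + b * q' z) = a * ubar u y q + b * ubar u y q'"
  unfolding ubar_def by (simp add: algebra_simps sum.distrib sum_distrib_left)

lemma pu_eq_if_ubar_scaled: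
  assumes "\<And>y. ubar u y r = c * ubar u y q" and "c \<noteq> 0"
  shows "pu u r = pu u q"
  using assms by (simp add: pu_def sum_distrib_left[symmetric])

lemma ubar_scaled_if_pu_eq:
  assumes "pu u q = pu u q'"
    and "(\<Sum>y\<in>UNIV. ubar u y q) \<noteq> 0" and "(\<Sum>y\<in>UNIV. ubar u y q') \<noteq> 0"
  shows "ubar u y q' = ((\<Sum>y\<in>UNIV. ubar u y q') / (\<Sum>y\<in>UNIV. ubar u y q)) * ubar u y q"
proof -
  have "ubar u y q / (\<Sum>y\<in>UNIV. ubar u y q) = ubar u y q' / (\<Sum>y\<in>UNIV. ubar u y q')"
    using assms(1) by (simp add: pu_def fun_eq_iff)
  then show ?thesis
    using assms(2,3) by (simp add: field_simps)
qed

theorem lemma1: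
  fixes u :: "'y::finite \<Rightarrow> 'y \<Rightarrow> real"
    and q q' p :: "'y \<Rightarrow> real" and \<alpha> :: real
  assumes nonneg: "\<And>a y. 0 \<le> u a y"
    and nondeg: "\<And>y. \<exists>a. 0 < u a y"
    and q: "q \<in> prob_simplex" and q': "q' \<in> prob_simplex"
    and \<alpha>: "0 \<le> \<alpha>" "\<alpha> \<le> 1"
    and eq: "pu u q = p" "pu u q' = p"
  shows "pu u (\<lambda>y. \<alpha> * q y + (1 - \<alpha>) * q' y) = p"
proof -
  let ?S = "\<lambda>r. \<Sum>y\<in>UNIV. ubar u y r"
  have "0 < ?S q" "0 < ?S q'"
    using sum_ubar_pos[of u, OF nonneg nondeg] q q' by blast+
  define k where "k = ?S q' / ?S q"
  have "0 < k"
    unfolding k_def using \<open>0 < ?S q\<close> \<open>0 < ?S q'\<close> by simp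
  have "ubar u y q' = k * ubar u y q" for y
    unfolding k_def using \<open>0 < ?S q\<close> \<open>0 < ?S q'\<close> eq
    by (intro ubar_scaled_if_pu_eq) simp_all
  then have "ubar u y (\<lambda>y. \<alpha> * q y + (1 - \<alpha>) * q' y) = (\<alpha> + (1 - \<alpha>) * k) * ubar u y q" for y
    by (simp only: ubar_linear_combination) (simp add: algebra_simps)
  moreover have "0 < \<alpha> + (1 - \<alpha>) * k"
    using \<alpha> \<open>0 < k\<close> by (cases "\<alpha> = 1") (simp_all add: add_nonneg_pos)
  then have "\<alpha> + (1 - \<alpha>) * k \<noteq> 0"
    by simp
  ultimately have "pu u (\<lambda>y. \<alpha> * q y + (1 - \<alpha>) * q' y) = pu u q"
    by (rule pu_eq_if_ubar_scaled)
  with eq(1) show ?thesis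
    by simp
qed

end
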